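(* Consider the following protocol. (1) Alice chooses $a\in\{0,1\}$ uniformly at random, prepares the two-qutrit state $\frac1{\sqrt2}|aa\rangle+\frac1{\sqrt2}|22\rangle$, and sends the second qutrit to Bob. (2) Bob chooses $x_0,x_1\in\{0,1\}$ uniformly at random, applies to the received qutrit the unitary $|0\rangle\mapsto(-1)^{x_0}|0\rangle$, $|1\rangle\mapsto(-1)^{x_1}|1\rangle$, $|2\rangle\mapsto|2\rangle$, and returns it to Alice. (3) Alice, who now holds $\frac{(-1)^{x_a}}{\sqrt2}|aa\rangle+\frac1{\sqrt2}|22\rangle$, performs a two-outcome measurement (depending on $a$) that reveals $x_a$ with certainty. Let $\delta\geq 0$ and $a\in\{0,1\}$. Suppose a cheating Alice, in place of step (1), prepares an arbitrary pure state $|\psi\rangle$ on a register of her own together with a qutrit, sends the qutrit to Bob, and that this state allows her (after Bob's step (2), with $x_0,x_1$ uniformly random) to guess $x_a$ correctly with probability at least $1-\delta$. Then $|\psi\rangle$ allows her to guess $x_{1-a}$ correctly with probability at most $\frac12+\sqrt{\delta(1-\delta)}+\delta$. In particular (taking $\delta=0$), $P^{\star}_{\mathrm{Alice}}=1/2$ for this protocol.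
   Context: $P^{\star}_{\mathrm{Alice}}$ denotes the maximum over $a\in\{0,1\}$ of the maximum, over cheating strategies of Alice that let her guess $x_a$ with certainty, of the probability that she correctly guesses $x_{1-a}$ and honest Bob, whose bits $x_0,x_1$ are uniformly random, does not abort. *)

theory Defs
  imports Complex_Main
begin

text \<open>Alice's register is C^d (d \<ge> 1 arbitrary), the qutrit is C^3.
  Basis states of the joint system are indexed by pairs (i,j), i < d, j < 3;
  a state vector is a function on such pairs, an operator a matrix indexed by pairs.\<close>

definition idx :: "nat \<Rightarrow> (nat \<times> nat) set" where
  "idx d = {..<d} \<times> {..<3}"

definition normalized :: "nat \<Rightarrow> (nat \<times> nat \<Rightarrow> complex) \<Rightarrow> bool" where
  "normalized d \<psi> \<longleftrightarrow> (\<Sum>p\<in>idx d. (cmod (\<psi> p))\<^sup>2) = 1"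

definition expect :: "nat \<Rightarrow> (nat \<times> nat \<Rightarrow> nat \<times> nat \<Rightarrow> complex) \<Rightarrow> (nat \<times> nat \<Rightarrow> complex) \<Rightarrow> complex" where
  "expect d E \<phi> = (\<Sum>p\<in>idx d. \<Sum>q\<in>idx d. cnj (\<phi> p) * E p q * \<phi> q)"

definition id_op :: "nat \<times> nat \<Rightarrow> nat \<times> nat \<Rightarrow> complex" where
  "id_op p q = (if p = q then 1 else 0)"

definition psd :: "nat \<Rightarrow> (nat \<times> nat \<Rightarrow> nat \<times> nat \<Rightarrow> complex) \<Rightarrow> bool" where
  "psd d E \<longleftrightarrow> (\<forall>\<phi>. Im (expect d E \<phi>) = 0 \<and> Re (expect d E \<phi>) \<ge> 0)"

text \<open>A two-outcome measurement (POVM) {I - E, E}: E is the effect of outcome 1, I - E that of outcome 0.\<close>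
definition effect :: "nat \<Rightarrow> (nat \<times> nat \<Rightarrow> nat \<times> nat \<Rightarrow> complex) \<Rightarrow> bool" where
  "effect d E \<longleftrightarrow> psd d E \<and> psd d (\<lambda>p q. id_op p q - E p q)"

definition sgn_bit :: "bool \<Rightarrow> complex" where
  "sgn_bit b = (if b then -1 else 1)"

definition bob_apply :: "bool \<Rightarrow> bool \<Rightarrow> (nat \<times> nat \<Rightarrow> complex) \<Rightarrow> (nat \<times> nat \<Rightarrow> complex)" where
  "bob_apply x0 x1 \<psi> = (\<lambda>(i, j). (if j = 0 then sgn_bit x0 else if j = 1 then sgn_bit x1 else 1) * \<psi> (i, j))"

definition sel :: "bool \<Rightarrow> bool \<Rightarrow> bool \<Rightarrow> bool" where
  "sel a x0 x1 = (if a then x1 else x0)"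

definition guess_prob :: "nat \<Rightarrow> (nat \<times> nat \<Rightarrow> complex) \<Rightarrow> (nat \<times> nat \<Rightarrow> nat \<times> nat \<Rightarrow> complex) \<Rightarrow> bool \<Rightarrow> real" where
  "guess_prob d \<psi> E a =
     (\<Sum>x0\<in>UNIV. \<Sum>x1\<in>UNIV.
        (1/4) * Re (expect d (if sel a x0 x1 then E else (\<lambda>p q. id_op p q - E p q)) (bob_apply x0 x1 \<psi>)))"

text \<open>P*_Alice: sup over a, cheating states psi (any dimension d of Alice's register) for which
  some measurement reveals x_a with certainty, of the probability of guessing x_{1-a}
  (honest Bob never aborts in this protocol).\<close>
definition P_star_Alice :: real where
  "P_star_Alice = Sup {guess_prob d \<psi> E' (\<not> a) | a d \<psi> E E'.
       0 < d \<and> normalized d \<psi> \<and> effect d E \<and> guess_prob d \<psi> E a = 1 \<and> effect d E'}"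

end

theory Submission
  imports Defs
begin

text \<open>Split Alice's state as \<open>\<psi>\<^sub>0 + \<psi>\<^sub>1 + \<psi>\<^sub>2\<close> along the qutrit levels. Bob's step flips the signs
  of \<open>\<psi>\<^sub>0\<close> and \<open>\<psi>\<^sub>1\<close> according to \<open>x\<^sub>0, x\<^sub>1\<close>, and averaging over these bits shows that a
  measurement with effect \<open>E\<close> guesses \<open>x\<^sub>a\<close> with probability \<open>1/2 - Re (\<langle>\<psi>\<^sub>a,E\<psi>\<^sub>2\<rangle> + \<langle>\<psi>\<^sub>2,E\<psi>\<^sub>a\<rangle>)\<close>.
  Since \<open>0 \<le> E \<le> I\<close> and the parts have disjoint supports, this cross term is at most
  \<open>\<parallel>\<psi>\<^sub>a\<parallel> \<parallel>\<psi>\<^sub>2\<parallel>\<close> in absolute value. Guessing \<open>x\<^sub>a\<close> with probability \<open>1 - \<delta>\<close> therefore forces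
  \<open>\<parallel>\<psi>\<^sub>a\<parallel>\<^sup>2 \<parallel>\<psi>\<^sub>2\<parallel>\<^sup>2 \<ge> (1/2 - \<delta>)\<^sup>2\<close>; as the three squared norms sum to 1, this leaves
  \<open>\<parallel>\<psi>\<^sub>1\<^sub>-\<^sub>a\<parallel>\<^sup>2 \<parallel>\<psi>\<^sub>2\<parallel>\<^sup>2 \<le> 1/4 - (1/2 - \<delta>)\<^sup>2 = \<delta>(1 - \<delta>)\<close>, which bounds the bias in guessing \<open>x\<^sub>1\<^sub>-\<^sub>a\<close>.\<close>

definition sesq ::
  "nat \<Rightarrow> (nat \<times> nat \<Rightarrow> nat \<times> nat \<Rightarrow> complex) \<Rightarrow> (nat \<times> nat \<Rightarrow> complex) \<Rightarrow> (nat \<times> nat \<Rightarrow> complex) \<Rightarrow> complex"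
  where "sesq d E f g = (\<Sum>p\<in>idx d. \<Sum>q\<in>idx d. cnj (f p) * E p q * g q)"

definition sqnorm :: "nat \<Rightarrow> (nat \<times> nat \<Rightarrow> complex) \<Rightarrow> real" where
  "sqnorm d f = (\<Sum>p\<in>idx d. (cmod (f p))\<^sup>2)"

lemma finite_idx [simp]: "finite (idx d)"
  by (simp add: idx_def)

lemma sqnorm_nonneg: "sqnorm d f \<ge> 0"
  by (simp add: sqnorm_def sum_nonneg)

lemma expect_eq_sesq: "expect d E f = sesq d E f f"
  by (simp add: expect_def sesq_def)

lemma sesq_add_left: "sesq d E (\<lambda>p. f p + g p) h = sesq d E f h + sesq d E g h"
  by (simp add: sesq_def distrib_left distrib_right sum.distrib)

lemma sesq_add_right: "sesq d E h (\<lambda>p. f p + g p) = sesq d E h f + sesq d E h g"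
  by (simp add: sesq_def distrib_left distrib_right sum.distrib)

lemma sesq_diff_left: "sesq d E (\<lambda>p. f p - g p) h = sesq d E f h - sesq d E g h"
  by (simp add: sesq_def left_diff_distrib right_diff_distrib sum_subtractf)

lemma sesq_diff_right: "sesq d E h (\<lambda>p. f p - g p) = sesq d E h f - sesq d E h g"
  by (simp add: sesq_def left_diff_distrib right_diff_distrib sum_subtractf)

lemma sesq_scale_left: "sesq d E (\<lambda>p. c * f p) h = cnj c * sesq d E f h"
  by (simp add: sesq_def sum_distrib_left mult.assoc)

lemma sesq_scale_right: "sesq d E h (\<lambda>p. c * f p) = c * sesq d E h f"
  by (simp add: sesq_def sum_distrib_left algebra_simps)

lemmas sesq_linear =
  sesq_add_left sesq_add_right sesq_diff_left sesq_diff_right sesq_scale_left sesq_scale_right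

lemma expect_id_op: "expect d id_op f = of_real (sqnorm d f)"
proof -
  have "expect d id_op f = (\<Sum>p\<in>idx d. cnj (f p) * f p)"
    unfolding expect_def id_op_def
    by (rule sum.cong[OF refl]) (simp add: if_distrib if_distribR sum.delta cong: if_cong)
  also have "\<dots> = (\<Sum>p\<in>idx d. of_real ((cmod (f p))\<^sup>2))"
    by (rule sum.cong[OF refl], subst complex_norm_square) (simp add: mult.commute)
  finally show ?thesis
    by (simp add: sqnorm_def)
qed

lemma expect_complement:
  "expect d (\<lambda>p q. id_op p q - E p q) f = of_real (sqnorm d f) - expect d E f"
  by (simp add: expect_def left_diff_distrib right_diff_distrib sum_subtractf flip: expect_id_op)

lemma effect_expect_bounds:
  assumes "effect d E"
  shows "0 \<le> Re (expect d E f)" "Re (expect d E f) \<le> sqnorm d f"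
  using assms by (auto simp: effect_def psd_def expect_complement)

lemma quadratic_nonneg_discriminant:
  fixes r x y :: real
  assumes le: "\<And>t. 2 * t * r \<le> t\<^sup>2 * x + y" and "x \<ge> 0"
  shows "r\<^sup>2 \<le> x * y"
proof (cases "x = 0")
  case True
  have "r = 0"
  proof (rule ccontr)
    assume "r \<noteq> 0"
    then have "2 * ((y + 1) / (2 * r)) * r = y + 1"
      by (simp add: field_simps)
    with le[of "(y + 1) / (2 * r)"] True show False
      by simp
  qed
  with True show ?thesis
    by simp
next
  case False
  with \<open>x \<ge> 0\<close> have "x > 0" by simp
  with le[of "r / x"] have "r\<^sup>2 / x \<le> y"
    by (simp add: power2_eq_square field_simps)
  with \<open>x > 0\<close> show ?thesis
    by (simp add: field_simps)
qed

text \<open>Expanding \<open>0 \<le> \<langle>tf - g, E(tf - g)\<rangle>\<close> and \<open>\<langle>tf + g, E(tf + g)\<rangle> \<le> \<parallel>tf + g\<parallel>\<^sup>2 = t\<^sup>2\<parallel>f\<parallel>\<^sup>2 + \<parallel>g\<parallel>\<^sup>2\<close>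
  gives a quadratic inequality in \<open>t\<close>; the disjoint supports make the cross term of the norm vanish.\<close>
lemma effect_cross_term_bound:
  assumes E: "effect d E" and disjoint: "\<And>p. f p = 0 \<or> g p = 0"
  shows "(Re (sesq d E f g + sesq d E g f))\<^sup>2 \<le> sqnorm d f * sqnorm d g"
proof (rule quadratic_nonneg_discriminant[OF _ sqnorm_nonneg])
  fix t :: real
  define plus where "plus = (\<lambda>p. of_real t * f p + g p)"
  define minus where "minus = (\<lambda>p. of_real t * f p - g p)"
  have "expect d E plus - expect d E minus = 2 * of_real t * (sesq d E f g + sesq d E g f)"
    unfolding plus_def minus_def expect_eq_sesq by (simp add: sesq_linear algebra_simps)
  from arg_cong[where f = Re, OF this]
  have "Re (expect d E plus) - Re (expect d E minus) = 2 * t * Re (sesq d E f g + sesq d E g f)"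
    by simp
  moreover have "sqnorm d plus = t\<^sup>2 * sqnorm d f + sqnorm d g"
  proof -
    have "(cmod (plus p))\<^sup>2 = t\<^sup>2 * (cmod (f p))\<^sup>2 + (cmod (g p))\<^sup>2" for p
      using disjoint[of p] by (auto simp: plus_def norm_mult power_mult_distrib)
    then show ?thesis
      by (simp add: sqnorm_def sum.distrib sum_distrib_left)
  qed
  ultimately show "2 * t * Re (sesq d E f g + sesq d E g f) \<le> t\<^sup>2 * sqnorm d f + sqnorm d g"
    using effect_expect_bounds[OF E, of plus] effect_expect_bounds[OF E, of minus] by linarith
qed

text \<open>Level 2 absorbs all \<open>j \<ge> 2\<close>, matching \<open>bob_apply\<close>, so the decomposition holds pointwise.\<close>
definition qutrit_part :: "nat \<Rightarrow> (nat \<times> nat \<Rightarrow> complex) \<Rightarrow> nat \<times> nat \<Rightarrow> complex" where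
  "qutrit_part j \<psi> p = (if min (snd p) 2 = j then \<psi> p else 0)"

lemma qutrit_parts_disjoint: "j \<noteq> k \<Longrightarrow> qutrit_part j \<psi> p = 0 \<or> qutrit_part k \<psi> p = 0"
  by (simp add: qutrit_part_def)

lemma bob_apply_eq_parts:
  "bob_apply x0 x1 \<psi> =
     (\<lambda>p. sgn_bit x0 * qutrit_part 0 \<psi> p + (sgn_bit x1 * qutrit_part 1 \<psi> p + qutrit_part 2 \<psi> p))"
  by (auto simp: bob_apply_def qutrit_part_def fun_eq_iff min_def)

lemma cnj_sgn_bit [simp]: "cnj (sgn_bit b) = sgn_bit b"
  by (simp add: sgn_bit_def)

lemma sqnorm_bob_apply: "sqnorm d (bob_apply x0 x1 \<psi>) = sqnorm d \<psi>"
  unfolding sqnorm_def bob_apply_def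
  by (rule sum.cong[OF refl]) (auto simp: sgn_bit_def norm_mult)

lemma sqnorm_eq_sum_parts:
  "sqnorm d \<psi> = sqnorm d (qutrit_part 0 \<psi>) + sqnorm d (qutrit_part 1 \<psi>) + sqnorm d (qutrit_part 2 \<psi>)"
  unfolding sqnorm_def sum.distrib[symmetric]
  by (rule sum.cong[OF refl]) (auto simp: qutrit_part_def min_def)

lemma guess_prob_eq_cross_term:
  assumes "normalized d \<psi>"
  shows "guess_prob d \<psi> E a = 1/2 -
    Re (sesq d E (qutrit_part (of_bool a) \<psi>) (qutrit_part 2 \<psi>)
      + sesq d E (qutrit_part 2 \<psi>) (qutrit_part (of_bool a) \<psi>))"
proof -
  define P where "P j k = sesq d E (qutrit_part j \<psi>) (qutrit_part k \<psi>)" for j k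
  have expand: "expect d E (bob_apply x0 x1 \<psi>) =
      sgn_bit x0 * sgn_bit x0 * P 0 0 + sgn_bit x0 * sgn_bit x1 * P 0 1 + sgn_bit x0 * P 0 2
    + sgn_bit x1 * sgn_bit x0 * P 1 0 + sgn_bit x1 * sgn_bit x1 * P 1 1 + sgn_bit x1 * P 1 2
    + sgn_bit x0 * P 2 0 + sgn_bit x1 * P 2 1 + P 2 2" for x0 x1
    unfolding expect_eq_sesq bob_apply_eq_parts P_def
    by (simp add: sesq_linear algebra_simps)
  have "sqnorm d (bob_apply x0 x1 \<psi>) = 1" for x0 x1
    using assms by (simp add: sqnorm_bob_apply normalized_def flip: sqnorm_def)
  then have complement: "Re (expect d (\<lambda>p q. id_op p q - E p q) (bob_apply x0 x1 \<psi>))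
      = 1 - Re (expect d E (bob_apply x0 x1 \<psi>))" for x0 x1
    by (simp add: expect_complement)
  show ?thesis
    unfolding guess_prob_def P_def[symmetric]
    by (cases a) (simp_all add: UNIV_bool sel_def if_distrib complement expand sgn_bit_def field_simps)
qed

lemma product_le_quarter_minus:
  fixes pa pb p2 c :: real
  assumes "pa + pb + p2 = 1" and "c \<le> pa * p2"
  shows "pb * p2 \<le> 1/4 - c"
proof -
  have "pb * p2 = p2 * (1 - p2) - pa * p2"
    using assms(1) by algebra
  moreover have "p2 * (1 - p2) \<le> 1/4"
    using zero_le_power2[of "p2 - 1/2"] by (simp add: power2_eq_square algebra_simps)
  ultimately show ?thesis
    using assms(2) by linarith
qed

lemma half_le_sqrt_add:
  fixes \<delta> :: real
  assumes "1/2 \<le> \<delta>"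
  shows "1/2 \<le> sqrt (\<delta> * (1 - \<delta>)) + \<delta>"
proof (cases "\<delta> \<le> 1")
  case True
  with assms have "0 \<le> sqrt (\<delta> * (1 - \<delta>))"
    by simp
  with assms show ?thesis
    by linarith
next
  case False
  text \<open>For \<open>\<delta> > 1\<close> the radicand is negative and \<open>sqrt\<close> is odd.\<close>
  have "sqrt (\<delta> * (1 - \<delta>)) = - sqrt (\<delta> * (\<delta> - 1))"
    by (simp add: real_sqrt_minus[symmetric] algebra_simps)
  moreover have "sqrt (\<delta> * (\<delta> - 1)) \<le> \<delta> - 1/2"
    using False by (intro real_le_lsqrt) (auto simp: power2_eq_square algebra_simps)
  ultimately show ?thesis
    by linarith
qed

lemma bias_tradeoff:
  fixes pa pb p2 ra rb \<delta> :: real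
  assumes nonneg: "pa \<ge> 0" "p2 \<ge> 0" and sum: "pa + pb + p2 = 1"
    and ra: "ra\<^sup>2 \<le> pa * p2" and rb: "rb\<^sup>2 \<le> pb * p2"
    and bias: "ra \<le> \<delta> - 1/2" and "\<delta> \<ge> 0"
  shows "- rb \<le> sqrt (\<delta> * (1 - \<delta>)) + \<delta>"
proof (cases "\<delta> \<le> 1/2")
  case True
  have "(1/2 - \<delta>)\<^sup>2 \<le> (- ra)\<^sup>2"
    using bias True by (intro power_mono) auto
  with ra have "(1/2 - \<delta>)\<^sup>2 \<le> pa * p2"
    by simp
  then have "pb * p2 \<le> 1/4 - (1/2 - \<delta>)\<^sup>2"
    by (rule product_le_quarter_minus[OF sum])
  with rb have "rb\<^sup>2 \<le> \<delta> * (1 - \<delta>)"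
    by (simp add: power2_eq_square algebra_simps)
  then have "\<bar>rb\<bar> \<le> sqrt (\<delta> * (1 - \<delta>))"
    using real_sqrt_le_mono by fastforce
  with \<open>\<delta> \<ge> 0\<close> show ?thesis
    by linarith
next
  case False
  have "pb * p2 \<le> 1/4"
    using product_le_quarter_minus[OF sum, of 0] nonneg by simp
  with rb have "rb\<^sup>2 \<le> (1/2)\<^sup>2"
    by (simp add: power2_eq_square)
  then have "\<bar>rb\<bar> \<le> 1/2"
    using real_sqrt_le_mono by fastforce
  with half_le_sqrt_add[of \<delta>] False show ?thesis
    by linarith
qed

lemma guess_prob_other_bit_le:
  assumes "normalized d \<psi>" and E: "effect d E" and E': "effect d E'"
    and guess: "guess_prob d \<psi> E a \<ge> 1 - \<delta>" and "\<delta> \<ge> 0"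
  shows "guess_prob d \<psi> E' (\<not> a) \<le> 1/2 + sqrt (\<delta> * (1 - \<delta>)) + \<delta>"
proof -
  let ?part = "\<lambda>j. qutrit_part j \<psi>"
  let ?cross = "\<lambda>E j. Re (sesq d E (?part j) (?part 2) + sesq d E (?part 2) (?part j))"
  have sum: "sqnorm d (?part (of_bool a)) + sqnorm d (?part (of_bool (\<not> a))) + sqnorm d (?part 2) = 1"
    using assms(1) sqnorm_eq_sum_parts[of d \<psi>]
    by (cases a) (simp_all add: normalized_def flip: sqnorm_def)
  have cross_a: "(?cross E (of_bool a))\<^sup>2 \<le> sqnorm d (?part (of_bool a)) * sqnorm d (?part 2)"
    by (intro effect_cross_term_bound[OF E] qutrit_parts_disjoint) simp
  have cross_b: "(?cross E' (of_bool (\<not> a)))\<^sup>2 \<le> sqnorm d (?part (of_bool (\<not> a))) * sqnorm d (?part 2)"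
    by (intro effect_cross_term_bound[OF E'] qutrit_parts_disjoint) simp
  have "?cross E (of_bool a) \<le> \<delta> - 1/2"
    using guess guess_prob_eq_cross_term[OF assms(1)] by simp
  from bias_tradeoff[OF sqnorm_nonneg sqnorm_nonneg sum cross_a cross_b this \<open>\<delta> \<ge> 0\<close>]
  show ?thesis
    using guess_prob_eq_cross_term[OF assms(1)] by simp
qed

text \<open>With a trivial register (\<open>d = 1\<close>), the qutrit state \<open>(|0\<rangle> + |2\<rangle>)/\<surd>2\<close> and the projector onto
  \<open>(|0\<rangle> - |2\<rangle>)/\<surd>2\<close> reveal \<open>x\<^sub>0\<close> with certainty, so the supremum \<open>1/2\<close> is attained.\<close>
definition honest_state :: "nat \<times> nat \<Rightarrow> complex" where
  "honest_state p = (if snd p \<in> {0, 2} then complex_of_real (sqrt (1/2)) else 0)"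

definition honest_effect :: "nat \<times> nat \<Rightarrow> nat \<times> nat \<Rightarrow> complex" where
  "honest_effect p q =
     (if snd p \<in> {0, 2} \<and> snd q \<in> {0, 2} then (if snd p = snd q then 1/2 else -1/2) else 0)"

lemma idx_one: "idx (Suc 0) = {(0, 0), (0, 1), (0, 2)}"
  by (auto simp: idx_def)

lemma sqnorm_one: "sqnorm 1 \<phi> = (cmod (\<phi> (0, 0)))\<^sup>2 + (cmod (\<phi> (0, 1)))\<^sup>2 + (cmod (\<phi> (0, 2)))\<^sup>2"
  by (simp add: sqnorm_def idx_one)

lemma expect_honest_effect:
  "expect 1 honest_effect \<phi> = of_real ((cmod (\<phi> (0, 0) - \<phi> (0, 2)))\<^sup>2 / 2)"
proof -
  have "expect 1 honest_effect \<phi> = (\<phi> (0, 0) - \<phi> (0, 2)) * cnj (\<phi> (0, 0) - \<phi> (0, 2)) / 2"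
    by (simp add: expect_def idx_one honest_effect_def algebra_simps)
  also have "\<dots> = of_real ((cmod (\<phi> (0, 0) - \<phi> (0, 2)))\<^sup>2) / 2"
    by (simp only: complex_norm_square)
  finally show ?thesis
    by simp
qed

lemma effect_honest_effect: "effect 1 honest_effect"
proof -
  have "(cmod (\<phi> (0, 0) - \<phi> (0, 2)))\<^sup>2 / 2 \<le> sqnorm 1 \<phi>" for \<phi>
  proof -
    have "(cmod (\<phi> (0, 0) - \<phi> (0, 2)))\<^sup>2 \<le> (cmod (\<phi> (0, 0)) + cmod (\<phi> (0, 2)))\<^sup>2"
      by (intro power_mono norm_triangle_ineq4) simp
    also have "\<dots> \<le> 2 * (cmod (\<phi> (0, 0)))\<^sup>2 + 2 * (cmod (\<phi> (0, 2)))\<^sup>2"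
      using zero_le_power2[of "cmod (\<phi> (0, 0)) - cmod (\<phi> (0, 2))"]
      by (simp add: power2_eq_square algebra_simps)
    finally show ?thesis
      unfolding sqnorm_one using zero_le_power2[of "cmod (\<phi> (0, 1))"] by linarith
  qed
  then show ?thesis
    unfolding effect_def psd_def expect_complement expect_honest_effect by simp
qed

lemma honest_state_normalized: "normalized 1 honest_state"
  by (simp add: normalized_def idx_one honest_state_def power2_eq_square)

lemma guess_prob_honest:
  "guess_prob 1 honest_state honest_effect False = 1"
  "guess_prob 1 honest_state honest_effect True = 1/2"
  unfolding guess_prob_eq_cross_term[OF honest_state_normalized]
  by (simp_all add: sesq_def idx_one qutrit_part_def honest_effect_def honest_state_def)

theorem proposition6:
  "(\<forall>(\<delta>::real) (a::bool) (d::nat) (\<psi>::nat \<times> nat \<Rightarrow> complex).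
      \<delta> \<ge> 0 \<longrightarrow> 0 < d \<longrightarrow> normalized d \<psi> \<longrightarrow>
      (\<exists>E. effect d E \<and> guess_prob d \<psi> E a \<ge> 1 - \<delta>) \<longrightarrow>
      (\<forall>E'. effect d E' \<longrightarrow> guess_prob d \<psi> E' (\<not> a) \<le> 1/2 + sqrt (\<delta> * (1 - \<delta>)) + \<delta>))
   \<and> P_star_Alice = 1/2"
proof (intro conjI allI impI)
  fix \<delta> :: real and a d \<psi> E'
  assume "\<delta> \<ge> 0" "normalized d \<psi>" "\<exists>E. effect d E \<and> guess_prob d \<psi> E a \<ge> 1 - \<delta>" "effect d E'"
  then show "guess_prob d \<psi> E' (\<not> a) \<le> 1/2 + sqrt (\<delta> * (1 - \<delta>)) + \<delta>"
    using guess_prob_other_bit_le by blast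
next
  show "P_star_Alice = 1/2"
    unfolding P_star_Alice_def
  proof (rule cSup_eq_maximum)
    show "1/2 \<in> {guess_prob d \<psi> E' (\<not> a) | a d \<psi> E E'.
        0 < d \<and> normalized d \<psi> \<and> effect d E \<and> guess_prob d \<psi> E a = 1 \<and> effect d E'}"
      using guess_prob_honest honest_state_normalized effect_honest_effect
      by (intro CollectI exI[of _ False] exI[of _ 1]) auto
  next
    fix x
    assume "x \<in> {guess_prob d \<psi> E' (\<not> a) | a d \<psi> E E'.
        0 < d \<and> normalized d \<psi> \<and> effect d E \<and> guess_prob d \<psi> E a = 1 \<and> effect d E'}"
    then show "x \<le> 1/2"
      using guess_prob_other_bit_le[where \<delta> = 0] by force
  qed
qed

end
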